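(* Let $a\in C^1(\mathbb R)$ be convex, let $\eta\in C^2(\mathbb R)$ and let $q$ satisfy $q'=\eta'a'$. For $u^+\ne u^-$ define $$c_\eta(u^+,u^-)=q(u^+)-q(u^-)-\frac{a(u^+)-a(u^-)}{u^+-u^-}\big(\eta(u^+)-\eta(u^-)\big).$$ Then for all $u^\pm\in\mathbb R$ with $u^+\neq u^-$, $$|c_\eta(u^+,u^-)|\le\frac12\Big(\sup_{[u^-,u^+]}|\eta''|\Big)\,\Delta(u^+,u^-).$$
   Context: $a''$ denotes the distributional second derivative of $a$ (a nonnegative measure). $[u^-,u^+]$ denotes the closed segment between $u^-$ and $u^+$ regardless of order. The regularity cost is $\Delta(u_1,u_2)=\frac12\int_{u_1}^{u_2}\int_{u_1}^{u_2}|a'(v)-a'(w)|\,dv\,dw=\int_{[u_1,u_2]}(u_2-s)(s-u_1)\,a''(ds)$. *)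

theory Defs
  imports "HOL-Analysis.Analysis"
begin

definition Delta :: "(real \<Rightarrow> real) \<Rightarrow> real \<Rightarrow> real \<Rightarrow> real" where
  "Delta a' u1 u2 = (1/2) * integral {min u1 u2..max u1 u2}
      (\<lambda>v. integral {min u1 u2..max u1 u2} (\<lambda>w. \<bar>a' v - a' w\<bar>))"

definition c_eta :: "(real \<Rightarrow> real) \<Rightarrow> (real \<Rightarrow> real) \<Rightarrow> (real \<Rightarrow> real) \<Rightarrow> real \<Rightarrow> real \<Rightarrow> real" where
  "c_eta a \<eta> q up um = q up - q um - (a up - a um) / (up - um) * (\<eta> up - \<eta> um)"

end

theory Submission
  imports Defs
begin

text \<open>Let \<open>B\<close> be the gap between \<open>a\<close> and its chord over \<open>[L, R]\<close>; convexity makes \<open>B \<le> 0\<close>.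
  Since \<open>B\<close> vanishes at both ends and \<open>B' = a' - (slope of the chord)\<close>, the function
  \<open>q - slope \<cdot> \<eta> - \<eta>' B\<close> is an antiderivative of \<open>-\<eta>'' B\<close>, so \<open>c\<^sub>\<eta> = -\<integral> \<eta>'' B\<close> and
  \<open>|c\<^sub>\<eta>| \<le> sup |\<eta>''| \<cdot> (-\<integral> B)\<close>. The integral \<open>-\<integral> B\<close> is the error of the trapezoidal rule for
  \<open>a\<close>, and because \<open>a'\<close> is monotone the absolute value in \<open>\<Delta>\<close> can be resolved explicitly,
  which shows that \<open>\<Delta>\<close> is exactly twice that error.\<close>

definition chord_gap :: "(real \<Rightarrow> real) \<Rightarrow> real \<Rightarrow> real \<Rightarrow> real \<Rightarrow> real" where
  "chord_gap a L R x = a x - a L - (a R - a L) / (R - L) * (x - L)"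

definition trapezoid_defect :: "(real \<Rightarrow> real) \<Rightarrow> real \<Rightarrow> real \<Rightarrow> real" where
  "trapezoid_defect a L R = (a L + a R) * (R - L) / 2 - integral {L..R} a"

lemma fundamental_theorem_of_calculus_real:
  fixes F f :: "real \<Rightarrow> real"
  assumes "L \<le> R" "\<And>x. x \<in> {L..R} \<Longrightarrow> (F has_real_derivative f x) (at x within {L..R})"
  shows "(f has_integral (F R - F L)) {L..R}"
  using assms by (intro fundamental_theorem_of_calculus)
    (auto simp: has_real_derivative_iff_has_vector_derivative)

lemma convex_on_deriv_mono:
  fixes a a' :: "real \<Rightarrow> real"
  assumes a_deriv: "\<And>x. (a has_real_derivative a' x) (at x)"
    and a_convex: "convex_on UNIV a" and "x \<le> y"
  shows "a' x \<le> a' y"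
proof (cases "x = y")
  case False
  with \<open>x \<le> y\<close> have "x < y" by simp
  have "a y - a x \<ge> a' x * (y - x)"
    by (rule convex_on_imp_above_tangent[OF a_convex]) (auto simp: a_deriv)
  moreover have "a x - a y \<ge> a' y * (x - y)"
    by (rule convex_on_imp_above_tangent[OF a_convex]) (auto simp: a_deriv)
  ultimately have "(a' y - a' x) * (y - x) \<ge> 0" by (simp add: algebra_simps)
  with \<open>x < y\<close> show ?thesis by (simp add: zero_le_mult_iff)
qed simp

lemma chord_gap_left [simp]: "chord_gap a L R L = 0"
  by (simp add: chord_gap_def)

lemma chord_gap_right [simp]: "L \<noteq> R \<Longrightarrow> chord_gap a L R R = 0"
  by (simp add: chord_gap_def)

lemma chord_gap_nonpos:
  assumes "convex_on {L..R} a" "x \<in> {L..R}"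
  shows "chord_gap a L R x \<le> 0"
  using convex_onD_Icc'[OF assms] by (simp add: chord_gap_def algebra_simps)

lemma chord_gap_has_integral:
  fixes a :: "real \<Rightarrow> real"
  assumes a_cont: "continuous_on {L..R} a" and "L < R"
  shows "((\<lambda>x. - chord_gap a L R x) has_integral trapezoid_defect a L R) {L..R}"
proof -
  define s where "s = (a R - a L) / (R - L)"
  define P where "P x = s * (x - L)\<^sup>2 / 2 + a L * x - integral {L..x} a" for x
  have gap: "chord_gap a L R x = a x - a L - s * (x - L)" for x
    by (simp add: chord_gap_def s_def)
  have ftc: "((\<lambda>x. - chord_gap a L R x) has_integral P R - P L) {L..R}"
  proof (rule fundamental_theorem_of_calculus_real)
    fix x assume "x \<in> {L..R}"
    then show "(P has_real_derivative - chord_gap a L R x) (at x within {L..R})"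
      unfolding P_def gap
      by (auto intro!: derivative_eq_intros integral_has_real_derivative a_cont
          simp: field_simps)
  qed (use \<open>L < R\<close> in simp)
  have "P R - P L = s * (R - L) * (R - L) / 2 + a L * (R - L) - integral {L..R} a"
    by (simp add: P_def power2_eq_square algebra_simps)
  also have "s * (R - L) = a R - a L"
    using \<open>L < R\<close> by (simp add: s_def)
  finally have "P R - P L = trapezoid_defect a L R"
    by (simp add: trapezoid_defect_def field_simps)
  with ftc show ?thesis by simp
qed

lemma c_eta_has_integral:
  fixes a a' \<eta> \<eta>' \<eta>'' q :: "real \<Rightarrow> real"
  assumes a_deriv: "\<And>x. (a has_real_derivative a' x) (at x)"
    and eta_deriv: "\<And>x. (\<eta> has_real_derivative \<eta>' x) (at x)"
    and eta'_deriv: "\<And>x. (\<eta>' has_real_derivative \<eta>'' x) (at x)"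
    and q_deriv: "\<And>x. (q has_real_derivative \<eta>' x * a' x) (at x)"
    and "L < R"
  shows "((\<lambda>x. - \<eta>'' x * chord_gap a L R x) has_integral c_eta a \<eta> q R L) {L..R}"
proof -
  define s where "s = (a R - a L) / (R - L)"
  define F where "F x = q x - s * \<eta> x - \<eta>' x * chord_gap a L R x" for x
  have gap: "chord_gap a L R x = a x - a L - s * (x - L)" for x
    by (simp add: chord_gap_def s_def)
  have "((\<lambda>x. - \<eta>'' x * chord_gap a L R x) has_integral F R - F L) {L..R}"
  proof (rule fundamental_theorem_of_calculus_real)
    fix x
    have "(F has_real_derivative \<eta>' x * a' x - s * \<eta>' x
        - (\<eta>'' x * chord_gap a L R x + \<eta>' x * (a' x - s * 1))) (at x within {L..R})"
      unfolding F_def gap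
      by (auto intro!: derivative_eq_intros DERIV_subset[OF a_deriv] DERIV_subset[OF eta_deriv]
          DERIV_subset[OF eta'_deriv] DERIV_subset[OF q_deriv])
    then show "(F has_real_derivative - \<eta>'' x * chord_gap a L R x) (at x within {L..R})"
      by (simp add: algebra_simps)
  qed (use \<open>L < R\<close> in simp)
  moreover have "F R - F L = q R - q L - s * (\<eta> R - \<eta> L)"
    using \<open>L < R\<close> by (simp add: F_def algebra_simps)
  then have "F R - F L = c_eta a \<eta> q R L"
    by (simp add: c_eta_def s_def)
  ultimately show ?thesis by simp
qed

lemma abs_c_eta_le_trapezoid_defect:
  fixes a a' \<eta> \<eta>' \<eta>'' q :: "real \<Rightarrow> real"
  assumes a_deriv: "\<And>x. (a has_real_derivative a' x) (at x)"
    and a_convex: "convex_on {L..R} a"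
    and eta_deriv: "\<And>x. (\<eta> has_real_derivative \<eta>' x) (at x)"
    and eta'_deriv: "\<And>x. (\<eta>' has_real_derivative \<eta>'' x) (at x)"
    and q_deriv: "\<And>x. (q has_real_derivative \<eta>' x * a' x) (at x)"
    and "L < R"
    and eta''_bound: "\<And>x. x \<in> {L..R} \<Longrightarrow> \<bar>\<eta>'' x\<bar> \<le> M"
  shows "\<bar>c_eta a \<eta> q R L\<bar> \<le> M * trapezoid_defect a L R"
proof -
  let ?c = "c_eta a \<eta> q R L"
  note c_int = c_eta_has_integral[OF a_deriv eta_deriv eta'_deriv q_deriv \<open>L < R\<close>]
  have "continuous_on {L..R} a"
    by (meson DERIV_isCont a_deriv continuous_at_imp_continuous_on)
  from has_integral_mult_right[OF chord_gap_has_integral[OF this \<open>L < R\<close>], of M]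
  have gap_int: "((\<lambda>x. M * - chord_gap a L R x) has_integral M * trapezoid_defect a L R) {L..R}" .
  have pointwise: "\<bar>- \<eta>'' x * chord_gap a L R x\<bar> \<le> M * - chord_gap a L R x"
    if "x \<in> {L..R}" for x
  proof -
    have gap: "chord_gap a L R x \<le> 0"
      using chord_gap_nonpos[OF a_convex that] .
    then have "\<bar>- \<eta>'' x * chord_gap a L R x\<bar> = \<bar>\<eta>'' x\<bar> * - chord_gap a L R x"
      by (simp add: abs_mult)
    also have "\<dots> \<le> M * - chord_gap a L R x"
      using eta''_bound[OF that] gap by (intro mult_right_mono) auto
    finally show ?thesis .
  qed
  have "?c \<le> M * trapezoid_defect a L R"
    by (rule has_integral_le[OF c_int gap_int]) (use pointwise in \<open>blast dest: abs_le_D1\<close>)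
  moreover have "- (M * trapezoid_defect a L R) \<le> ?c"
    by (rule has_integral_le[OF has_integral_neg[OF gap_int] c_int])
      (use pointwise in \<open>metis abs_le_D2 minus_le_iff\<close>)
  ultimately show ?thesis by (simp add: abs_le_iff)
qed

text \<open>Monotonicity of \<open>a'\<close> splits \<open>|a' v - a' w|\<close> at \<open>w = v\<close> into two pieces with explicit
  antiderivatives.\<close>

lemma abs_deriv_diff_has_integral:
  fixes a a' :: "real \<Rightarrow> real"
  assumes a_deriv: "\<And>x. (a has_real_derivative a' x) (at x)"
    and a_convex: "convex_on UNIV a" and v: "v \<in> {L..R}"
  shows "((\<lambda>w. \<bar>a' v - a' w\<bar>) has_integral a' v * (2 * v - L - R) + a L + a R - 2 * a v) {L..R}"
proof -
  have left: "((\<lambda>w. \<bar>a' v - a' w\<bar>) has_integral (a' v * v - a v) - (a' v * L - a L)) {L..v}"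
  proof (rule has_integral_eq)
    show "((\<lambda>w. a' v - a' w) has_integral (a' v * v - a v) - (a' v * L - a L)) {L..v}"
      using v by (intro fundamental_theorem_of_calculus_real)
        (auto intro!: derivative_eq_intros DERIV_subset[OF a_deriv])
    show "a' v - a' w = \<bar>a' v - a' w\<bar>" if "w \<in> {L..v}" for w
      using convex_on_deriv_mono[OF a_deriv a_convex, of w v] that by auto
  qed
  have right: "((\<lambda>w. \<bar>a' v - a' w\<bar>) has_integral (a R - a' v * R) - (a v - a' v * v)) {v..R}"
  proof (rule has_integral_eq)
    show "((\<lambda>w. a' w - a' v) has_integral (a R - a' v * R) - (a v - a' v * v)) {v..R}"
      using v by (intro fundamental_theorem_of_calculus_real)
        (auto intro!: derivative_eq_intros DERIV_subset[OF a_deriv])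
    show "a' w - a' v = \<bar>a' v - a' w\<bar>" if "w \<in> {v..R}" for w
      using convex_on_deriv_mono[OF a_deriv a_convex, of v w] that by auto
  qed
  from has_integral_combine[OF _ _ left right] v show ?thesis
    by (simp add: algebra_simps)
qed

lemma Delta_eq_trapezoid_defect:
  fixes a a' :: "real \<Rightarrow> real"
  assumes a_deriv: "\<And>x. (a has_real_derivative a' x) (at x)"
    and a_convex: "convex_on UNIV a" and "L < R"
  shows "Delta a' R L = 2 * trapezoid_defect a L R"
proof -
  have a_cont: "continuous_on {L..R} a"
    by (meson DERIV_isCont a_deriv continuous_at_imp_continuous_on)
  define G where "G v = a v * (2 * v - L - R) - 4 * integral {L..v} a + (a L + a R) * v" for v
  have "((\<lambda>v. integral {L..R} (\<lambda>w. \<bar>a' v - a' w\<bar>)) has_integral G R - G L) {L..R}"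
  proof (rule has_integral_eq)
    show "((\<lambda>v. a' v * (2 * v - L - R) + a L + a R - 2 * a v) has_integral G R - G L) {L..R}"
    proof (rule fundamental_theorem_of_calculus_real)
      fix v assume "v \<in> {L..R}"
      then have "(G has_real_derivative a' v * (2 * v - L - R) + a v * (2 * 1 - 0 - 0)
          - 4 * a v + (a L + a R) * 1) (at v within {L..R})"
        unfolding G_def
        by (auto intro!: derivative_eq_intros DERIV_subset[OF a_deriv]
            integral_has_real_derivative a_cont)
      then show "(G has_real_derivative a' v * (2 * v - L - R) + a L + a R - 2 * a v)
          (at v within {L..R})"
        by (simp add: algebra_simps)
    qed (use \<open>L < R\<close> in simp)
    show "a' v * (2 * v - L - R) + a L + a R - 2 * a v = integral {L..R} (\<lambda>w. \<bar>a' v - a' w\<bar>)"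
      if "v \<in> {L..R}" for v
      using integral_unique[OF abs_deriv_diff_has_integral[OF a_deriv a_convex that]] by simp
  qed
  moreover have "G R - G L = 4 * trapezoid_defect a L R"
    by (simp add: G_def trapezoid_defect_def algebra_simps)
  ultimately show ?thesis
    using \<open>L < R\<close> by (simp add: Delta_def integral_unique)
qed

lemma c_eta_commute: "c_eta a \<eta> q um up = - c_eta a \<eta> q up um"
proof (cases "up = um")
  case False
  then have "up - um \<noteq> 0" "um - up \<noteq> 0" by simp_all
  then show ?thesis by (simp add: c_eta_def field_simps)
qed (simp add: c_eta_def)

lemma Delta_commute: "Delta a' um up = Delta a' up um"
  by (simp add: Delta_def min.commute max.commute)

theorem lemma2p1:
  fixes a a' \<eta> \<eta>' \<eta>'' q :: "real \<Rightarrow> real"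
  assumes a_deriv: "\<And>x. (a has_real_derivative a' x) (at x)"
    and a'_cont: "continuous_on UNIV a'"
    and a_convex: "convex_on UNIV a"
    and eta_deriv: "\<And>x. (\<eta> has_real_derivative \<eta>' x) (at x)"
    and eta'_deriv: "\<And>x. (\<eta>' has_real_derivative \<eta>'' x) (at x)"
    and eta''_cont: "continuous_on UNIV \<eta>''"
    and q_deriv: "\<And>x. (q has_real_derivative \<eta>' x * a' x) (at x)"
    and neq: "up \<noteq> um"
  shows "\<bar>c_eta a \<eta> q up um\<bar>
           \<le> (1/2) * (SUP x\<in>{min um up..max um up}. \<bar>\<eta>'' x\<bar>) * Delta a' up um"
proof -
  define L where "L = min um up"
  define R where "R = max um up"
  define M where "M = (SUP x\<in>{L..R}. \<bar>\<eta>'' x\<bar>)"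
  have "L < R" using neq by (auto simp: L_def R_def)
  have "compact ((\<lambda>x. \<bar>\<eta>'' x\<bar>) ` {L..R})"
    using eta''_cont by (intro compact_continuous_image continuous_intros)
      (auto intro: continuous_on_subset)
  then have "\<bar>\<eta>'' x\<bar> \<le> M" if "x \<in> {L..R}" for x
    unfolding M_def by (intro cSUP_upper that bounded_imp_bdd_above compact_imp_bounded)
  from abs_c_eta_le_trapezoid_defect[OF a_deriv convex_on_subset[OF a_convex]
      eta_deriv eta'_deriv q_deriv \<open>L < R\<close> this]
  have "\<bar>c_eta a \<eta> q R L\<bar> \<le> (1/2) * M * Delta a' R L"
    using Delta_eq_trapezoid_defect[OF a_deriv a_convex \<open>L < R\<close>] by simp
  moreover have "\<bar>c_eta a \<eta> q R L\<bar> = \<bar>c_eta a \<eta> q up um\<bar>" "Delta a' R L = Delta a' up um"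
    by (auto simp: L_def R_def min_def max_def c_eta_commute[of a \<eta> q up um]
        Delta_commute[of a' up um])
  ultimately show ?thesis by (simp add: M_def L_def R_def)
qed

end
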